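(* If $(T,d_T)$ is an $\mathbb{R}$-tree (possibly non-separable), then $\Delta_T^{(c)}(R)\leq 2R$ for all $R\in[0,\infty)$. Consequently, for every $\varepsilon>0$, every $\mathbb{R}$-tree $(4+\varepsilon)$-Lipschitz embeds into $c_0^+(\kappa)$ for some cardinal $\kappa$.
   Context: A metric space $(T,d_T)$ is an $\mathbb{R}$-tree if (i) for any $s,t\in T$ there is a unique isometric embedding $\phi_{s,t}\colon[0,d_T(s,t)]\to T$ with $\phi_{s,t}(0)=s$ and $\phi_{s,t}(d_T(s,t))=t$; and (ii) any injective continuous map $\varphi\colon[0,1]\to T$ has the same range as $\phi_{\varphi(0),\varphi(1)}$. For a cover $\mathcal{U}$ of $T$: $\mathrm{diam}(\mathcal{U})=\sup_{U\in\mathcal{U}}\mathrm{diam}(U)$; $\mathcal{L}(\mathcal{U})=\sup\{d\in[0,\infty): \text{every } E\subseteq T \text{ with } \mathrm{diam}(E)<d \text{ is contained in some } U\in\mathcal{U}\}$; point-finite means each point lies in only finitely many members. $\Delta_T^{(c)}(R)=\inf\{\mathrm{diam}(\mathcal{U}): \mathcal{U} \text{ point-finite cover of } T,\ \mathcal{L}(\mathcal{U})\geq R\}$. For a cardinal $\kappa$, $c_0^+(\kappa)$ is the set of nonnegative real families $(x_\xi)_{\xi<\kappa}$ with $\{\xi: x_\xi>\eta\}$ finite for every $\eta>0$, with the sup metric. A $K$-Lipschitz embedding is an injective $f$ with $\mathrm{Lip}(f)\mathrm{Lip}(f^{-1})\leq K$. *)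

theory Defs
  imports "HOL-Analysis.Analysis"
begin

definition isometric_path :: "'a::metric_space \<Rightarrow> 'a \<Rightarrow> (real \<Rightarrow> 'a) \<Rightarrow> bool" where
  "isometric_path s t \<phi> \<longleftrightarrow>
     \<phi> 0 = s \<and> \<phi> (dist s t) = t \<and>
     (\<forall>a\<in>{0..dist s t}. \<forall>b\<in>{0..dist s t}. dist (\<phi> a) (\<phi> b) = \<bar>a - b\<bar>)"

definition R_tree :: "'a::metric_space itself \<Rightarrow> bool" where
  "R_tree _ \<longleftrightarrow>
     (\<forall>s t::'a. \<exists>\<phi>. isometric_path s t \<phi> \<and>
        (\<forall>\<psi>. isometric_path s t \<psi> \<longrightarrow> (\<forall>r\<in>{0..dist s t}. \<psi> r = \<phi> r))) \<and>
     (\<forall>\<psi>::real \<Rightarrow> 'a. continuous_on {0..1} \<psi> \<and> inj_on \<psi> {0..1} \<longrightarrow>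
        (\<forall>\<phi>. isometric_path (\<psi> 0) (\<psi> 1) \<phi> \<longrightarrow>
              \<psi> ` {0..1} = \<phi> ` {0..dist (\<psi> 0) (\<psi> 1)}))"

text \<open>Diameter of a set, with values in [0,\<infinity>]; diam {} = 0.\<close>
definition sdiam :: "'a::metric_space set \<Rightarrow> ennreal" where
  "sdiam E = (SUP x\<in>E. SUP y\<in>E. ennreal (dist x y))"

definition cover_diam :: "'a::metric_space set set \<Rightarrow> ennreal" where
  "cover_diam \<U> = (SUP U\<in>\<U>. sdiam U)"

definition lebesgue_num :: "'a::metric_space set set \<Rightarrow> ennreal" where
  "lebesgue_num \<U> = Sup {ennreal d | d. d \<ge> 0 \<and>
      (\<forall>E. sdiam E < ennreal d \<longrightarrow> (\<exists>U\<in>\<U>. E \<subseteq> U))}"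

definition point_finite_cover :: "'a set set \<Rightarrow> bool" where
  "point_finite_cover \<U> \<longleftrightarrow> \<Union>\<U> = UNIV \<and> (\<forall>x. finite {U\<in>\<U>. x \<in> U})"

text \<open>\<Delta>^(c)_T(R), infimum over the empty set being \<infinity>.\<close>
definition Delta_c :: "'a::metric_space itself \<Rightarrow> real \<Rightarrow> ennreal" where
  "Delta_c _ R = (INF \<U>\<in>{\<U>::'a set set. point_finite_cover \<U> \<and> lebesgue_num \<U> \<ge> ennreal R}.
                    cover_diam \<U>)"

definition c0plus :: "('i \<Rightarrow> real) set" where
  "c0plus = {x. (\<forall>i. x i \<ge> 0) \<and> (\<forall>\<eta>>0. finite {i. x i > \<eta>})}"

definition c0dist :: "('i \<Rightarrow> real) \<Rightarrow> ('i \<Rightarrow> real) \<Rightarrow> real" where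
  "c0dist x y = (SUP i. \<bar>x i - y i\<bar>)"

text \<open>K-Lipschitz embedding: injective f with Lip(f) Lip(f^{-1}) \<le> K
  (Lipschitz constants are attained, so this is the existential form).\<close>
definition lip_embedding ::
  "('a \<Rightarrow> 'a \<Rightarrow> real) \<Rightarrow> 'a set \<Rightarrow> ('b \<Rightarrow> 'b \<Rightarrow> real) \<Rightarrow> ('a \<Rightarrow> 'b) \<Rightarrow> real \<Rightarrow> bool" where
  "lip_embedding dA A dB f K \<longleftrightarrow> inj_on f A \<and>
     (\<exists>L M. 0 \<le> L \<and> 0 \<le> M \<and> L * M \<le> K \<and>
        (\<forall>x\<in>A. \<forall>y\<in>A. dB (f x) (f y) \<le> L * dA x y \<and> dA x y \<le> M * dB (f x) (f y)))"

end

theory Submission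
  imports Defs "HOL-Library.Nat_Bijection"
begin

text \<open>Fix a root and let \<open>|z|\<close> be the distance from the root. A sector is the set of points \<open>z\<close> with
  \<open>e \<le> |z| < e + w\<close> whose geodesic from the root passes through a given point \<open>p\<close> at height \<open>e\<close>;
  its diameter is less than \<open>2w\<close>. Letting \<open>e\<close> run through a grid of step \<open>g\<close> gives a point-finite
  cover. An \<open>\<real>\<close>-tree is \<open>0\<close>-hyperbolic, so for a set \<open>E\<close> of diameter less than \<open>R\<close> the heights of its
  points exceed the infimum \<open>b\<close> of its Gromov products by less than \<open>R\<close>, and all geodesics to \<open>E\<close>
  agree up to height \<open>b\<close>: \<open>E\<close> lies in the sector of width \<open>R + g\<close> at the grid level below \<open>b\<close>.
  Hence \<open>\<Delta>(R) \<le> 2 (R + g)\<close> for every \<open>g > 0\<close>.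

  The embedding into \<open>c\<^sub>0\<^sup>+\<close> uses such covers at the scales \<open>s = (1 + c)\<^sup>k\<close> for all \<open>k \<in> \<int>\<close>, with
  coordinates the distances to the complements of the sectors; these are \<open>1\<close>-Lipschitz. Given
  \<open>x \<noteq> y\<close>, the scale with \<open>dist x y \<approx> 2 (1 + c)\<^sup>2 s\<close> has a sector containing the ball of radius
  \<open>(1 - c) s / 2\<close> about \<open>x\<close> but not \<open>y\<close>, so some coordinate separates \<open>x\<close> and \<open>y\<close> by
  \<open>dist x y (1 - c) / (4 (1 + c)\<^sup>2)\<close>, which tends to \<open>dist x y / 4\<close> as \<open>c \<rightarrow> 0\<close>.\<close>

section \<open>Geodesics in \<open>\<real>\<close>-trees\<close>

lemma R_tree_geodesic_exists:
  assumes "R_tree TYPE('a::metric_space)"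
  shows "\<exists>\<phi>. isometric_path (s::'a) t \<phi>"
  using assms unfolding R_tree_def by blast

lemma R_tree_geodesic_unique:
  assumes "R_tree TYPE('a::metric_space)"
    and "isometric_path (s::'a) t \<phi>" "isometric_path s t \<psi>" "r \<in> {0..dist s t}"
  shows "\<phi> r = \<psi> r"
proof -
  from assms(1) obtain \<omega> where "\<forall>\<psi>. isometric_path s t \<psi> \<longrightarrow> (\<forall>r\<in>{0..dist s t}. \<psi> r = \<omega> r)"
    unfolding R_tree_def by blast
  then show ?thesis using assms by metis
qed

lemma R_tree_arc_dist_split:
  assumes T: "R_tree TYPE('a::metric_space)"
    and g: "arc (g :: real \<Rightarrow> 'a)" and z: "z \<in> path_image g"
  shows "dist (pathstart g) (pathfinish g) = dist (pathstart g) z + dist z (pathfinish g)"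
proof -
  let ?x = "pathstart g" and ?y = "pathfinish g"
  obtain \<phi> where \<phi>: "isometric_path ?x ?y \<phi>" using R_tree_geodesic_exists[OF T] by blast
  have "path_image g = \<phi> ` {0..dist ?x ?y}"
    using T g \<phi> unfolding R_tree_def arc_def path_def path_image_def pathstart_def pathfinish_def
    by blast
  with z obtain u where u: "u \<in> {0..dist ?x ?y}" "z = \<phi> u" by auto
  have "dist ?x z = \<bar>0 - u\<bar>" "dist z ?y = \<bar>u - dist ?x ?y\<bar>"
    using \<phi> u unfolding isometric_path_def by (metis atLeastAtMost_iff zero_le_dist order_refl)+
  then show ?thesis using u by simp
qed

lemma R_tree_dist_join:
  assumes T: "R_tree TYPE('a::metric_space)"
    and arcs: "arc (g1 :: real \<Rightarrow> 'a)" "arc g2" and meet: "pathfinish g1 = pathstart g2"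
    and disjoint: "path_image g1 \<inter> path_image g2 \<subseteq> {pathstart g2}"
  shows "dist (pathstart g1) (pathfinish g2) =
    dist (pathstart g1) (pathfinish g1) + dist (pathstart g2) (pathfinish g2)"
proof -
  have "pathfinish g1 \<in> path_image (g1 +++ g2)"
    using meet pathfinish_in_path_image[of g1] by (simp add: path_image_join)
  with R_tree_arc_dist_split[OF T arc_join[OF arcs meet disjoint]] meet show ?thesis by simp
qed

lemma arc_isometric_segment:
  fixes \<gamma> :: "real \<Rightarrow> 'a::metric_space"
  assumes "a \<noteq> b"
    and iso: "\<And>u v. u \<in> closed_segment a b \<Longrightarrow> v \<in> closed_segment a b \<Longrightarrow> dist (\<gamma> u) (\<gamma> v) = \<bar>u - v\<bar>"
  shows "arc (\<gamma> \<circ> linepath a b)"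
proof -
  have "1-lipschitz_on (closed_segment a b) \<gamma>"
    by (rule lipschitz_onI) (auto simp: iso dist_real_def)
  then have "path (\<gamma> \<circ> linepath a b)"
    by (intro path_continuous_image lipschitz_on_continuous_on) auto
  moreover have "inj_on \<gamma> (closed_segment a b)"
    by (rule inj_onI) (use iso in fastforce)
  then have "inj_on (\<gamma> \<circ> linepath a b) {0..1}"
    using arc_imp_inj_on[OF arc_linepath[OF \<open>a \<noteq> b\<close>]]
    by (metis comp_inj_on path_image_def path_image_linepath)
  ultimately show ?thesis unfolding arc_def by blast
qed

locale rooted_R_tree =
  fixes root :: "'a::metric_space"
  assumes R_tree: "R_tree TYPE('a)"
begin

definition geod :: "'a \<Rightarrow> real \<Rightarrow> 'a" where
  "geod x = (SOME \<phi>. isometric_path root x \<phi>)"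

definition gromov :: "'a \<Rightarrow> 'a \<Rightarrow> real" where
  "gromov x y = (dist root x + dist root y - dist x y) / 2"

lemma isometric_path_geod: "isometric_path root x (geod x)"
  unfolding geod_def using R_tree_geodesic_exists[OF R_tree] by (metis someI_ex)

lemma geod_0 [simp]: "geod x 0 = root"
  and geod_end [simp]: "geod x (dist root x) = x"
  using isometric_path_geod unfolding isometric_path_def by blast+

lemma dist_geod:
  "a \<in> {0..dist root x} \<Longrightarrow> b \<in> {0..dist root x} \<Longrightarrow> dist (geod x a) (geod x b) = \<bar>a - b\<bar>"
  using isometric_path_geod unfolding isometric_path_def by blast

lemma dist_root_geod: "0 \<le> a \<Longrightarrow> a \<le> dist root x \<Longrightarrow> dist root (geod x a) = a"
  using dist_geod[of 0 x a] by simp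

lemma dist_geod_end: "0 \<le> a \<Longrightarrow> a \<le> dist root x \<Longrightarrow> dist (geod x a) x = dist root x - a"
  using dist_geod[of a x "dist root x"] by simp

lemma continuous_on_geod: "continuous_on {0..dist root x} (geod x)"
proof -
  have "1-lipschitz_on {0..dist root x} (geod x)"
    by (rule lipschitz_onI) (auto simp: dist_geod dist_real_def)
  then show ?thesis by (rule lipschitz_on_continuous_on)
qed

lemma geod_geod:
  assumes "0 \<le> a" "a \<le> t" "t \<le> dist root x"
  shows "geod (geod x t) a = geod x a"
proof -
  have t: "dist root (geod x t) = t" using dist_root_geod assms by simp
  have "isometric_path root (geod x t) (geod x)"
    unfolding isometric_path_def t using assms by (auto intro!: dist_geod)
  from R_tree_geodesic_unique[OF R_tree isometric_path_geod this] show ?thesis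
    using assms t by simp
qed

lemma geod_agree:
  assumes "geod x t = geod y t" "0 \<le> a" "a \<le> t" "t \<le> dist root x" "t \<le> dist root y"
  shows "geod x a = geod y a"
  by (metis assms geod_geod)

lemma last_common_point:
  obtains t where "0 \<le> t" "t \<le> dist root x" "t \<le> dist root y" "geod x t = geod y t"
    "\<And>u. u \<in> {0..dist root x} \<Longrightarrow> geod x u \<in> geod y ` {0..dist root y} \<Longrightarrow> u \<le> t"
proof -
  define A where "A = {0..dist root x} \<inter> geod x -` (geod y ` {0..dist root y})"
  have "closed (geod y ` {0..dist root y})"
    by (intro compact_imp_closed compact_continuous_image continuous_on_geod compact_Icc)
  then have "closed A"
    unfolding A_def by (rule continuous_closed_preimage[OF continuous_on_geod closed_atLeastAtMost])
  moreover have "0 \<in> A" unfolding A_def by (auto intro!: image_eqI[of _ _ 0])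
  moreover have "bdd_above A" unfolding A_def by (auto intro!: bdd_aboveI[of _ "dist root x"])
  ultimately have "Sup A \<in> A" using closed_contains_Sup by blast
  then obtain t' where t': "0 \<le> Sup A" "Sup A \<le> dist root x" "t' \<in> {0..dist root y}"
    "geod x (Sup A) = geod y t'"
    unfolding A_def by auto
  then have "t' = Sup A" using dist_root_geod[of t' y] dist_root_geod[of "Sup A" x] by simp
  with t' show thesis
    using cSup_upper[OF _ \<open>bdd_above A\<close>] by (intro that) (auto simp: A_def)
qed

text \<open>The geodesics to \<open>x\<close> and to \<open>y\<close> leave their last common point \<open>z\<close> in disjoint
  directions, so the concatenated path \<open>x \<rightarrow> z \<rightarrow> y\<close> is an arc; in an \<open>\<real>\<close>-tree it therefore
  traces the geodesic from \<open>x\<close> to \<open>y\<close>.\<close>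

lemma branch_point:
  obtains t where "0 \<le> t" "t \<le> dist root x" "t \<le> dist root y" "geod x t = geod y t"
    "dist x y = (dist root x - t) + (dist root y - t)"
proof -
  obtain t where t: "0 \<le> t" "t \<le> dist root x" "t \<le> dist root y" "geod x t = geod y t"
    and last: "\<And>u. u \<in> {0..dist root x} \<Longrightarrow> geod x u \<in> geod y ` {0..dist root y} \<Longrightarrow> u \<le> t"
    using last_common_point[of x y] by blast
  define z where "z = geod x t"
  have xz: "dist x z = dist root x - t" and zy: "dist z y = dist root y - t"
    using dist_geod_end[of t x] dist_geod_end[of t y] t by (simp_all add: z_def dist_commute)
  have "dist x y = dist x z + dist z y"
  proof (cases "t = dist root x \<or> t = dist root y")
    case True
    then have "z = x \<or> z = y" using t by (auto simp: z_def)
    then show ?thesis using xz zy by auto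
  next
    case False
    define g1 where "g1 = geod x \<circ> linepath (dist root x) t"
    define g2 where "g2 = geod y \<circ> linepath t (dist root y)"
    have seg: "closed_segment t (dist root x) = {t..dist root x}"
      "closed_segment t (dist root y) = {t..dist root y}"
      using t by (auto simp: closed_segment_eq_real_ivl)
    have arcs: "arc g1" "arc g2"
      unfolding g1_def g2_def using False t
      by (auto intro!: arc_isometric_segment dist_geod simp: closed_segment_commute seg)
    have ends: "pathstart g1 = x" "pathfinish g1 = z" "pathstart g2 = z" "pathfinish g2 = y"
      by (simp_all add: g1_def g2_def pathstart_compose pathfinish_compose z_def t)
    have "path_image g1 \<inter> path_image g2 \<subseteq> {pathstart g2}"
    proof
      fix w assume "w \<in> path_image g1 \<inter> path_image g2"
      then obtain u v where uv: "u \<in> {t..dist root x}" "v \<in> {t..dist root y}"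
        "w = geod x u" "w = geod y v"
        by (auto simp: g1_def g2_def path_image_compose closed_segment_commute seg)
      then have "geod x u \<in> geod y ` {0..dist root y}" using t by (auto intro!: image_eqI[of _ _ v])
      then have "u \<le> t" using uv t by (intro last) auto
      then show "w \<in> {pathstart g2}" using uv ends by (simp add: z_def)
    qed
    with R_tree_dist_join[OF R_tree arcs] ends show ?thesis by simp
  qed
  with t xz zy show thesis by (intro that) auto
qed

lemma gromov_nonneg: "0 \<le> gromov x y"
  unfolding gromov_def using dist_triangle[of root x y] dist_triangle[of x y root]
  by (simp add: dist_commute)

lemma gromov_self [simp]: "gromov x x = dist root x"
  unfolding gromov_def by simp

lemma gromov_commute: "gromov x y = gromov y x"
  unfolding gromov_def by (simp add: dist_commute)

lemma gromov_le: "gromov x y \<le> dist root x"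
  unfolding gromov_def using dist_triangle[of root y x] by (simp add: dist_commute)

lemma geod_agree_gromov: "0 \<le> a \<Longrightarrow> a \<le> gromov x y \<Longrightarrow> geod x a = geod y a"
  by (rule branch_point[of x y]) (auto intro: geod_agree simp: gromov_def)

lemma min_gromov_le: "min (gromov x y) (gromov x z) \<le> gromov y z"
proof -
  define m where "m = min (gromov x y) (gromov x z)"
  have m: "0 \<le> m" "m \<le> dist root y" "m \<le> dist root z"
    using gromov_nonneg gromov_le[of y x] gromov_le[of z x] by (auto simp: m_def gromov_commute)
  have "geod y m = geod z m"
    using geod_agree_gromov[of m x y] geod_agree_gromov[of m x z] m by (simp add: m_def)
  then have "dist y z \<le> (dist root y - m) + (dist root z - m)"
    using dist_triangle[of y z "geod y m"] dist_geod_end[of m y] dist_geod_end[of m z] m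
    by (simp add: dist_commute)
  then show ?thesis unfolding gromov_def m_def by simp
qed

end

section \<open>A point-finite cover by sectors\<close>

lemma sdiam_le:
  assumes "\<And>z w. z \<in> E \<Longrightarrow> w \<in> E \<Longrightarrow> dist z w \<le> d"
  shows "sdiam E \<le> ennreal d"
  unfolding sdiam_def by (intro SUP_least ennreal_leI assms)

lemma dist_le_sdiam: "z \<in> E \<Longrightarrow> w \<in> E \<Longrightarrow> ennreal (dist z w) \<le> sdiam E"
  unfolding sdiam_def by (meson SUP_upper order_trans)

lemma sdiam_less_ennrealD:
  assumes "sdiam E < ennreal R"
  obtains r where "r < R" "\<And>z w. z \<in> E \<Longrightarrow> w \<in> E \<Longrightarrow> dist z w \<le> r"
proof -
  have "sdiam E < top" using assms by (metis ennreal_less_top order.strict_trans)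
  then have r: "sdiam E = ennreal (enn2real (sdiam E))" by simp
  show thesis
  proof
    show "enn2real (sdiam E) < R"
      using assms r by (metis enn2real_nonneg ennreal_less_iff)
    show "dist z w \<le> enn2real (sdiam E)" if "z \<in> E" "w \<in> E" for z w
      using dist_le_sdiam[OF that] r by (metis ennreal_le_iff enn2real_nonneg)
  qed
qed

lemma grid_point_below:
  fixes b g :: real
  assumes "0 < g" "0 \<le> b"
  obtains n :: nat where "real n * g \<le> b" "b < real n * g + g"
proof
  define n where "n = nat \<lfloor>b / g\<rfloor>"
  have n: "real n = of_int \<lfloor>b / g\<rfloor>" using assms by (simp add: n_def)
  show "real n * g \<le> b"
    using n assms by (simp add: pos_le_divide_eq[symmetric])
  have "b / g < real n + 1" using n by linarith
  then show "b < real n * g + g" using assms by (simp add: pos_divide_less_eq algebra_simps)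
qed

context rooted_R_tree
begin

definition sector :: "real \<Rightarrow> real \<Rightarrow> 'a \<Rightarrow> 'a set" where
  "sector e w p = {z. e \<le> dist root z \<and> dist root z < e + w \<and> geod z e = p}"

lemma dist_sector_less:
  assumes "z \<in> sector e w p" "v \<in> sector e w p" "0 \<le> e"
  shows "dist z v < 2 * w"
proof -
  have "dist p z = dist root z - e" "dist p v = dist root v - e"
    using assms dist_geod_end[of e z] dist_geod_end[of e v] by (auto simp: sector_def dist_commute)
  then show ?thesis
    using assms dist_triangle3[of z v p] by (auto simp: sector_def)
qed

definition gromov_inf :: "'a set \<Rightarrow> real" where
  "gromov_inf E = (INF (u, v)\<in>E \<times> E. gromov u v)"

lemma bdd_below_gromov: "bdd_below ((\<lambda>(u, v). gromov u v) ` (E \<times> E))"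
  by (auto intro!: bdd_belowI[of _ 0] gromov_nonneg)

lemma gromov_inf_le: "u \<in> E \<Longrightarrow> v \<in> E \<Longrightarrow> gromov_inf E \<le> gromov u v"
  unfolding gromov_inf_def using cINF_lower[OF bdd_below_gromov, of "(u, v)"] by simp

lemma le_gromov_inf:
  "E \<noteq> {} \<Longrightarrow> (\<And>u v. u \<in> E \<Longrightarrow> v \<in> E \<Longrightarrow> \<beta> \<le> gromov u v) \<Longrightarrow> \<beta> \<le> gromov_inf E"
  unfolding gromov_inf_def by (intro cINF_greatest) auto

lemma dist_root_le_gromov_inf:
  assumes z: "z \<in> E" and diam: "\<And>u v. u \<in> E \<Longrightarrow> v \<in> E \<Longrightarrow> dist u v \<le> r"
  shows "dist root z \<le> gromov_inf E + r"
proof (rule field_le_epsilon)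
  fix \<eta> :: real assume "0 < \<eta>"
  then have "gromov_inf E < gromov_inf E + \<eta> / 2" by simp
  then obtain w v where "w \<in> E" "v \<in> E" "gromov w v < gromov_inf E + \<eta> / 2"
    unfolding gromov_inf_def using z by (subst (asm) cINF_less_iff[OF _ bdd_below_gromov]) auto
  then obtain u where u: "u \<in> E" "gromov z u < gromov_inf E + \<eta> / 2"
    using min_gromov_le[of z w v] by (metis min_def not_le order_le_less_trans)
  then have "dist root z + dist root u - dist z u < 2 * gromov_inf E + \<eta>"
    by (simp add: gromov_def)
  moreover have "gromov_inf E \<le> dist root u" using gromov_inf_le[OF u(1) u(1)] by simp
  ultimately show "dist root z \<le> gromov_inf E + r + \<eta>" using diam[OF z u(1)] by linarith
qed

text \<open>Since every point of \<open>E\<close> has height between \<open>gromov_inf E\<close> and \<open>gromov_inf E + r\<close> and all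
  geodesics from the root to \<open>E\<close> agree up to height \<open>gromov_inf E\<close>, the set \<open>E\<close> lies in the sector
  starting at the grid level just below \<open>gromov_inf E\<close>.\<close>

lemma subset_sector:
  assumes g: "0 < g" and x0: "x0 \<in> E"
    and diam: "\<And>z w. z \<in> E \<Longrightarrow> w \<in> E \<Longrightarrow> dist z w \<le> r" and "r < R"
  obtains n :: nat where "E \<subseteq> sector (real n * g) (R + g) (geod x0 (real n * g))"
    "gromov_inf E < real n * g + g"
proof -
  have "0 \<le> gromov_inf E" using x0 gromov_nonneg by (intro le_gromov_inf) auto
  then obtain n :: nat where n: "real n * g \<le> gromov_inf E" "gromov_inf E < real n * g + g"
    using grid_point_below[OF g] by blast
  have "E \<subseteq> sector (real n * g) (R + g) (geod x0 (real n * g))"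
  proof
    fix z assume z: "z \<in> E"
    have "gromov_inf E \<le> dist root z" using gromov_inf_le[OF z z] by simp
    moreover have "dist root z \<le> gromov_inf E + r" using dist_root_le_gromov_inf[OF z diam] .
    moreover have "geod z (real n * g) = geod x0 (real n * g)"
      using geod_agree_gromov gromov_inf_le[OF z x0] n g by simp
    ultimately show "z \<in> sector (real n * g) (R + g) (geod x0 (real n * g))"
      using n \<open>r < R\<close> by (simp add: sector_def)
  qed
  with n show thesis by (intro that)
qed

definition sector_cover :: "real \<Rightarrow> real \<Rightarrow> 'a set set" where
  "sector_cover g w = (\<lambda>(n :: nat, p). sector (real n * g) w p) ` UNIV"

lemma sector_in_sector_cover: "sector (real n * g) w p \<in> sector_cover g w"
  unfolding sector_cover_def by (auto intro!: image_eqI[of _ _ "(n, p)"])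

lemma point_finite_sector_cover:
  assumes g: "0 < g" "g \<le> w"
  shows "point_finite_cover (sector_cover g w)"
  unfolding point_finite_cover_def
proof (intro conjI allI)
  show "\<Union> (sector_cover g w) = UNIV"
  proof (intro set_eqI iffI)
    fix z :: 'a
    obtain n :: nat where "real n * g \<le> dist root z" "dist root z < real n * g + g"
      using grid_point_below[OF g(1) zero_le_dist] by blast
    then have "z \<in> sector (real n * g) w (geod z (real n * g))"
      using g by (simp add: sector_def)
    then show "z \<in> \<Union> (sector_cover g w)" using sector_in_sector_cover by blast
  qed simp
  fix z :: 'a
  let ?N = "nat \<lfloor>dist root z / g\<rfloor>"
  have "{V \<in> sector_cover g w. z \<in> V} \<subseteq> (\<lambda>n. sector (real n * g) w (geod z (real n * g))) ` {..?N}"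
  proof
    fix V assume "V \<in> {V \<in> sector_cover g w. z \<in> V}"
    then obtain n p where V: "V = sector (real n * g) w p" "real n * g \<le> dist root z"
      "geod z (real n * g) = p"
      unfolding sector_cover_def by (auto simp: sector_def)
    then have "n \<le> ?N" using g by (intro le_nat_floor) (simp add: pos_le_divide_eq)
    with V show "V \<in> (\<lambda>n. sector (real n * g) w (geod z (real n * g))) ` {..?N}" by auto
  qed
  then show "finite {V \<in> sector_cover g w. z \<in> V}" by (rule finite_subset) simp
qed

lemma lebesgue_num_sector_cover:
  assumes "0 < g" "0 \<le> R"
  shows "ennreal R \<le> lebesgue_num (sector_cover g (R + g))"
  unfolding lebesgue_num_def
proof (rule Sup_upper, intro CollectI exI conjI allI impI)
  fix E :: "'a set" assume "sdiam E < ennreal R"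
  then obtain r where "r < R" and r: "\<And>z w. z \<in> E \<Longrightarrow> w \<in> E \<Longrightarrow> dist z w \<le> r"
    using sdiam_less_ennrealD by blast
  then show "\<exists>U\<in>sector_cover g (R + g). E \<subseteq> U"
  proof (cases "E = {}")
    case False
    then obtain x0 where "x0 \<in> E" by blast
    with \<open>r < R\<close> r obtain n :: nat where "E \<subseteq> sector (real n * g) (R + g) (geod x0 (real n * g))"
      using subset_sector[OF \<open>0 < g\<close>] by metis
    then show ?thesis using sector_in_sector_cover by blast
  qed (use sector_in_sector_cover in blast)
qed (use assms in auto)

lemma cover_diam_sector_cover:
  assumes "0 \<le> g"
  shows "cover_diam (sector_cover g w) \<le> ennreal (2 * w)"
  unfolding cover_diam_def sector_cover_def
proof (intro SUP_least, clarify)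
  fix n :: nat and p :: 'a
  show "sdiam (sector (real n * g) w p) \<le> ennreal (2 * w)"
    using assms dist_sector_less[of _ "real n * g" w p] by (intro sdiam_le) (simp add: less_imp_le)
qed

lemma Delta_c_le:
  assumes "0 \<le> R"
  shows "Delta_c TYPE('a) R \<le> ennreal (2 * R)"
proof (rule ennreal_le_epsilon)
  fix e :: real assume "0 < e"
  define g where "g = e / 2"
  have g: "0 < g" "g \<le> R + g" using \<open>0 < e\<close> assms by (auto simp: g_def)
  have "Delta_c TYPE('a) R \<le> cover_diam (sector_cover g (R + g))"
    unfolding Delta_c_def
    using point_finite_sector_cover[OF g] lebesgue_num_sector_cover[OF g(1) assms]
    by (intro INF_lower) auto
  also have "\<dots> \<le> ennreal (2 * (R + g))"
    using g by (intro cover_diam_sector_cover) simp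
  also have "2 * (R + g) = 2 * R + e" by (simp add: g_def)
  finally show "Delta_c TYPE('a) R \<le> ennreal (2 * R) + ennreal e"
    using assms \<open>0 < e\<close> by (simp add: ennreal_plus[symmetric] del: ennreal_plus)
qed

end

section \<open>An embedding into \<open>c\<^sub>0\<^sup>+\<close>\<close>

lemma le_infdist_compl_if_ball_subset:
  assumes "ball x r \<subseteq> V" "V \<noteq> UNIV"
  shows "r \<le> infdist x (- V)"
proof -
  have "- V \<noteq> {}" using assms(2) by blast
  then show ?thesis
    unfolding infdist_notempty[OF \<open>- V \<noteq> {}\<close>]
    using assms(1) by (intro cINF_greatest) (auto simp: subset_eq not_less)
qed

definition geom_scale :: "real \<Rightarrow> int \<Rightarrow> real" where
  "geom_scale c k = (1 + c) powr real_of_int k"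

lemma geom_scale_pos: "0 < c \<Longrightarrow> 0 < geom_scale c k"
  unfolding geom_scale_def by simp

lemma geom_scale_mono: "0 < c \<Longrightarrow> k \<le> l \<Longrightarrow> geom_scale c k \<le> geom_scale c l"
  unfolding geom_scale_def by (intro powr_mono) auto

lemma exists_geom_scale_between:
  assumes c: "0 < c" and D: "0 < D"
  obtains k where "2 * (1 + c) * geom_scale c k \<le> D" "D < 2 * (1 + c) ^ 2 * geom_scale c k"
proof
  define t where "t = log (1 + c) (D / (2 * (1 + c)))"
  have t: "(1 + c) powr t = D / (2 * (1 + c))" unfolding t_def using c D by simp
  have "geom_scale c \<lfloor>t\<rfloor> \<le> (1 + c) powr t" unfolding geom_scale_def using c by (intro powr_mono) auto
  then show "2 * (1 + c) * geom_scale c \<lfloor>t\<rfloor> \<le> D" using c t by (simp add: le_divide_eq mult.commute)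
  have "(1 + c) powr t < (1 + c) powr (real_of_int \<lfloor>t\<rfloor> + 1)" using c by (intro powr_less_mono) auto
  also have "\<dots> = (1 + c) * geom_scale c \<lfloor>t\<rfloor>" unfolding geom_scale_def powr_add using c by simp
  finally show "D < 2 * (1 + c) ^ 2 * geom_scale c \<lfloor>t\<rfloor>"
    using c t by (simp add: divide_less_eq power2_eq_square mult_ac)
qed

lemma floor_log_le_if_less_geom_scale:
  assumes "0 < c" "0 < a" "a < geom_scale c k"
  shows "\<lfloor>log (1 + c) a\<rfloor> \<le> k"
proof -
  have "log (1 + c) a < real_of_int k" using assms by (simp add: geom_scale_def log_less_iff)
  then show ?thesis by (simp add: floor_le_iff)
qed

lemma le_floor_log_if_geom_scale_le:
  assumes "0 < c" "geom_scale c k \<le> b"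
  shows "k \<le> \<lfloor>log (1 + c) b\<rfloor>"
proof -
  have "0 < b" using assms geom_scale_pos[of c k] by linarith
  with assms show ?thesis by (simp add: geom_scale_def le_log_iff le_floor_iff)
qed

lemma lip_embedding_c0dist:
  fixes f :: "'a::metric_space \<Rightarrow> 'i \<Rightarrow> real"
  assumes lip: "\<And>x y i. \<bar>f x i - f y i\<bar> \<le> dist x y"
    and sep: "\<And>x y. \<exists>i. dist x y \<le> K * \<bar>f x i - f y i\<bar>"
    and K: "0 \<le> K"
  shows "lip_embedding dist UNIV c0dist f K"
proof -
  have upper: "c0dist (f x) (f y) \<le> dist x y" for x y
    unfolding c0dist_def by (rule cSUP_least) (auto intro: lip)
  have coord_le: "\<bar>f x i - f y i\<bar> \<le> c0dist (f x) (f y)" for x y i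
    unfolding c0dist_def by (rule cSUP_upper) (auto intro: bdd_aboveI2 lip)
  have lower: "dist x y \<le> K * c0dist (f x) (f y)" for x y
    using sep[of x y] coord_le[where x = x and y = y] K by (meson mult_left_mono order_trans)
  have "inj f"
  proof (rule injI)
    fix x y assume "f x = f y"
    then show "x = y" using lower[of x y] by (simp add: c0dist_def)
  qed
  with upper lower K show ?thesis
    unfolding lip_embedding_def by (intro conjI exI[of _ 1] exI[of _ K]) auto
qed

lemma distortion_constant:
  fixes \<epsilon> :: real
  assumes "0 < \<epsilon>"
  defines "c \<equiv> \<epsilon> / (\<epsilon> + 16)"
  shows "0 < c" "c < 1" "4 * (1 + c) ^ 2 / (1 - c) \<le> 4 + \<epsilon>"
proof -
  show c: "0 < c" "c < 1" using assms by (simp_all add: c_def)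
  have "\<epsilon> * (1 - c) = 16 * c" using assms by (simp add: c_def field_simps)
  moreover have "c * c \<le> c" using c by (simp add: mult_left_le_one_le)
  ultimately have "4 * (1 + c) ^ 2 \<le> (4 + \<epsilon>) * (1 - c)"
    by (simp add: power2_eq_square algebra_simps)
  then show "4 * (1 + c) ^ 2 / (1 - c) \<le> 4 + \<epsilon>" using c by (simp add: pos_divide_le_eq)
qed

context rooted_R_tree
begin

text \<open>Level \<open>0\<close> is left out: at every scale it
  would give a coordinate of size about \<open>dist root x\<close>, and the family would not tend to \<open>0\<close>.\<close>

definition coord :: "real \<Rightarrow> int \<Rightarrow> nat \<Rightarrow> 'a \<Rightarrow> 'a \<Rightarrow> real" where
  "coord c k m p x = (if m = 0 then 0 else
     infdist x (- sector (real m * (c * geom_scale c k)) (geom_scale c k + c * geom_scale c k) p))"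

definition embed :: "real \<Rightarrow> 'a \<Rightarrow> nat \<times> 'a \<Rightarrow> real" where
  "embed c x = (\<lambda>(n, p). coord c (int_decode (fst (prod_decode n))) (snd (prod_decode n)) p x)"

lemma embed_encode: "embed c x (prod_encode (int_encode k, m), p) = coord c k m p x"
  by (simp add: embed_def)

lemma embed_nonneg: "0 \<le> embed c x i"
  by (cases i) (simp add: embed_def coord_def infdist_nonneg)

lemma embed_lipschitz: "\<bar>embed c x i - embed c y i\<bar> \<le> dist x y"
  by (cases i) (simp add: embed_def coord_def infdist_triangle_abs)

lemma coord_posD:
  assumes c: "0 < c" and pos: "0 < coord c k m p x"
  shows "m \<noteq> 0" "real m * (c * geom_scale c k) \<le> dist root x" "p = geod x (real m * (c * geom_scale c k))"
    "coord c k m p x < (1 + 2 * c) * geom_scale c k"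
proof -
  define s where "s = geom_scale c k"
  define V where "V = sector (real m * (c * s)) (s + c * s) p"
  show m: "m \<noteq> 0" using pos by (auto simp: coord_def split: if_splits)
  then have coord: "coord c k m p x = infdist x (- V)" by (simp add: coord_def V_def s_def)
  have "x \<in> V" using pos coord by (metis ComplI infdist_zero less_irrefl)
  then have x: "real m * (c * s) \<le> dist root x" "p = geod x (real m * (c * s))"
    and x_less: "dist root x < real m * (c * s) + (s + c * s)"
    by (auto simp: V_def sector_def)
  then show "real m * (c * geom_scale c k) \<le> dist root x" "p = geod x (real m * (c * geom_scale c k))"
    by (simp_all add: s_def)
  have s: "0 < s" using geom_scale_pos[OF c] by (simp add: s_def)
  define e where "e = (real m - 1) * (c * s)"
  have cs: "0 \<le> c * s" using c s by simp
  have "0 \<le> real m - 1" using m by simp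
  then have e: "0 \<le> e" "e \<le> dist root x"
    using x(1) cs unfolding e_def by (simp, simp add: algebra_simps)
  have "geod x e \<notin> V"
    using dist_root_geod[OF e] mult_pos_pos[OF c s] by (auto simp: V_def sector_def e_def algebra_simps)
  then have "infdist x (- V) \<le> dist x (geod x e)" by (intro infdist_le) simp
  also have "\<dots> = dist root x - e" using dist_geod_end[OF e] by (simp add: dist_commute)
  also have "\<dots> < (1 + 2 * c) * s" using x_less by (simp add: e_def algebra_simps)
  finally show "coord c k m p x < (1 + 2 * c) * geom_scale c k" by (simp add: coord s_def)
qed

text \<open>A coordinate above \<open>\<eta>\<close> forces \<open>\<eta> < (1 + 2c) s \<le> (1 + 2c) dist root x / c\<close>, which leaves
  finitely many scales \<open>k\<close>, finitely many levels \<open>m\<close> for each, and then \<open>p\<close> is determined.\<close>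

lemma finite_embed_gt:
  assumes c: "0 < c" and \<eta>: "0 < \<eta>"
  shows "finite {i. \<eta> < embed c x i}"
proof -
  define k0 where "k0 = \<lfloor>log (1 + c) (\<eta> / (1 + 2 * c))\<rfloor>"
  define k1 where "k1 = \<lfloor>log (1 + c) (dist root x / c)\<rfloor>"
  define N where "N = nat \<lfloor>dist root x / (c * geom_scale c k0)\<rfloor>"
  have "{i. \<eta> < embed c x i} \<subseteq> (\<lambda>(k, m). (prod_encode (int_encode k, m), geod x (real m * (c * geom_scale c k))))
      ` ({k0..k1} \<times> {..N})"
  proof
    fix i assume "i \<in> {i. \<eta> < embed c x i}"
    then obtain n p where i: "i = (n, p)" and gt: "\<eta> < embed c x (n, p)" by (cases i) auto
    define k where "k = int_decode (fst (prod_decode n))"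
    define m where "m = snd (prod_decode n)"
    have n: "n = prod_encode (int_encode k, m)" by (simp add: k_def m_def)
    have gt: "\<eta> < coord c k m p x" using gt by (simp add: n embed_encode)
    note pos = coord_posD[OF c order.strict_trans[OF \<eta> gt]]
    have s: "0 < geom_scale c k" "0 < geom_scale c k0" using geom_scale_pos[OF c] by auto
    have "\<eta> / (1 + 2 * c) < geom_scale c k" using gt pos(4) c by (simp add: divide_less_eq mult.commute)
    then have "k0 \<le> k" unfolding k0_def using \<eta> c by (intro floor_log_le_if_less_geom_scale) auto
    have "1 * (c * geom_scale c k) \<le> real m * (c * geom_scale c k)"
      using pos(1) c s by (intro mult_right_mono) auto
    then have "c * geom_scale c k \<le> dist root x" using pos(2) by linarith
    then have "geom_scale c k \<le> dist root x / c" using c by (simp add: pos_le_divide_eq mult.commute)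
    then have "k \<le> k1" unfolding k1_def by (rule le_floor_log_if_geom_scale_le[OF c])
    have "real m * (c * geom_scale c k0) \<le> real m * (c * geom_scale c k)"
      using geom_scale_mono[OF c \<open>k0 \<le> k\<close>] c by (intro mult_left_mono) auto
    then have "real m \<le> dist root x / (c * geom_scale c k0)"
      using pos(2) c s by (simp add: pos_le_divide_eq)
    then have "m \<le> N" unfolding N_def by (rule le_nat_floor)
    with \<open>k0 \<le> k\<close> \<open>k \<le> k1\<close> show "i \<in> (\<lambda>(k, m). (prod_encode (int_encode k, m), geod x (real m * (c * geom_scale c k))))
      ` ({k0..k1} \<times> {..N})"
      using i n pos(3) by (auto intro!: image_eqI[of _ _ "(k, m)"])
  qed
  then show ?thesis by (rule finite_subset) simp
qed

lemma embed_in_c0plus: "0 < c \<Longrightarrow> embed c x \<in> c0plus"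
  unfolding c0plus_def using embed_nonneg finite_embed_gt by blast

lemma gromov_ge_on_ball:
  assumes "z \<in> ball x r" "w \<in> ball x r"
  shows "dist root x - 2 * r \<le> gromov z w"
proof -
  have "dist root x \<le> dist root z + dist x z" "dist root x \<le> dist root w + dist x w"
    "dist z w \<le> dist x z + dist x w"
    using dist_triangle[of root x z] dist_triangle[of root x w] dist_triangle3[of z w x]
    by (simp_all add: dist_commute)
  then show ?thesis using assms by (simp add: gromov_def)
qed

text \<open>The Gromov products on the ball are at least \<open>dist root x - (1 - c) s \<ge> 2 c s\<close>, so the grid
  level of the sector found by \<open>subset_sector\<close> is at least \<open>1\<close>.\<close>

lemma ball_subset_sector:
  assumes c: "0 < c" "c < 1" and s: "0 < s" and x: "(1 + c) * s \<le> dist root x"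
  obtains m :: nat where "m \<noteq> 0"
    "ball x ((1 - c) * s / 2) \<subseteq> sector (real m * (c * s)) (s + c * s) (geod x (real m * (c * s)))"
proof -
  let ?r = "(1 - c) * s / 2"
  have "0 < c * s" "(1 - c) * s < s" using c s by auto
  moreover have "x \<in> ball x ?r" using c s by simp
  moreover have "dist z w \<le> (1 - c) * s" if "z \<in> ball x ?r" "w \<in> ball x ?r" for z w
    using that dist_triangle3[of z w x] by simp
  ultimately obtain m :: nat
    where sub: "ball x ?r \<subseteq> sector (real m * (c * s)) (s + c * s) (geod x (real m * (c * s)))"
    and above: "gromov_inf (ball x ?r) < real m * (c * s) + c * s"
    using subset_sector[of "c * s" x "ball x ?r" "(1 - c) * s" s] by (auto simp: add.commute)
  have "dist root x - 2 * ?r \<le> gromov_inf (ball x ?r)"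
    using \<open>x \<in> ball x ?r\<close> gromov_ge_on_ball[of _ x ?r] by (intro le_gromov_inf) blast+
  with above have "dist root x - 2 * ?r < real m * (c * s) + c * s" by linarith
  moreover have "2 * ?r = s - c * s" "(1 + c) * s = s + c * s" by (simp_all add: field_simps)
  ultimately have "c * s < real m * (c * s)" using x by linarith
  then have "m \<noteq> 0" using \<open>0 < c * s\<close> by (cases m) auto
  with sub show thesis by (intro that)
qed

lemma exists_coord_separating:
  assumes c: "0 < c" "c < 1" and xy: "dist root y \<le> dist root x" "x \<noteq> y"
  obtains k m p where "dist x y \<le> 4 * (1 + c) ^ 2 / (1 - c) * \<bar>coord c k m p x - coord c k m p y\<bar>"
proof -
  have "0 < dist x y" using xy(2) by simp
  then obtain k where k: "2 * (1 + c) * geom_scale c k \<le> dist x y"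
    "dist x y < 2 * (1 + c) ^ 2 * geom_scale c k"
    by (rule exists_geom_scale_between[OF c(1)])
  define s where "s = geom_scale c k"
  have s: "0 < s" using geom_scale_pos[OF c(1)] by (simp add: s_def)
  have "2 * ((1 + c) * s) \<le> dist root x + dist root y"
    using k(1) dist_triangle3[of x y root] unfolding s_def mult.assoc by linarith
  then have "(1 + c) * s \<le> dist root x" using xy(1) by linarith
  then obtain m :: nat where m: "m \<noteq> 0"
    and ball: "ball x ((1 - c) * s / 2) \<subseteq> sector (real m * (c * s)) (s + c * s) (geod x (real m * (c * s)))"
    using ball_subset_sector[OF c s] by blast
  define V where "V = sector (real m * (c * s)) (s + c * s) (geod x (real m * (c * s)))"
  have coord: "coord c k m (geod x (real m * (c * s))) z = infdist z (- V)" for z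
    using m by (simp add: coord_def V_def s_def)
  have "0 < real m * (c * s)" using m c s by simp
  then have "root \<notin> V" by (simp add: V_def sector_def)
  then have "(1 - c) * s / 2 \<le> infdist x (- V)"
    using ball by (intro le_infdist_compl_if_ball_subset) (auto simp: V_def)
  moreover have "y \<notin> V"
  proof
    assume "y \<in> V"
    moreover have "x \<in> V" using ball c s by (auto simp: V_def)
    ultimately have "dist x y < 2 * (s + c * s)"
      using \<open>0 < real m * (c * s)\<close> unfolding V_def by (intro dist_sector_less) auto
    with k show False by (simp add: s_def algebra_simps)
  qed
  ultimately have "(1 - c) * s / 2 \<le> \<bar>coord c k m (geod x (real m * (c * s))) x
      - coord c k m (geod x (real m * (c * s))) y\<bar>"
    by (simp add: coord)
  moreover have "dist x y \<le> 4 * (1 + c) ^ 2 / (1 - c) * ((1 - c) * s / 2)"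
    using k c by (simp add: s_def power2_eq_square)
  moreover have "0 \<le> 4 * (1 + c) ^ 2 / (1 - c)" using c by simp
  ultimately show thesis by (meson mult_left_mono order_trans that)
qed

lemma embed_separates:
  assumes c: "0 < c" "c < 1" and K: "4 * (1 + c) ^ 2 / (1 - c) \<le> K"
  shows "\<exists>i. dist x y \<le> K * \<bar>embed c x i - embed c y i\<bar>"
proof -
  have "\<exists>k m p. dist x y \<le> 4 * (1 + c) ^ 2 / (1 - c) * \<bar>coord c k m p x - coord c k m p y\<bar>"
    if "dist root y \<le> dist root x" for x y
  proof (cases "x = y")
    case False
    from exists_coord_separating[OF c that False] show ?thesis by blast
  qed simp
  then obtain k m p where sep: "dist x y \<le> 4 * (1 + c) ^ 2 / (1 - c) * \<bar>coord c k m p x - coord c k m p y\<bar>"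
    by (metis abs_minus_commute dist_commute nle_le)
  have "4 * (1 + c) ^ 2 / (1 - c) * \<bar>coord c k m p x - coord c k m p y\<bar>
      \<le> K * \<bar>coord c k m p x - coord c k m p y\<bar>"
    by (rule mult_right_mono[OF K abs_ge_zero])
  with sep show ?thesis by (metis embed_encode order_trans)
qed

end

theorem proposition4p4:
  assumes "R_tree TYPE('a::metric_space)"
  shows "(\<forall>R::real. R \<ge> 0 \<longrightarrow> Delta_c TYPE('a) R \<le> ennreal (2 * R)) \<and>
         (\<forall>\<epsilon>>0. \<exists>f :: 'a \<Rightarrow> (nat \<times> 'a \<Rightarrow> real).
             f ` UNIV \<subseteq> c0plus \<and> lip_embedding dist UNIV c0dist f (4 + \<epsilon>))"
proof -
  interpret rooted_R_tree "undefined :: 'a" using assms by unfold_locales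
  have "\<exists>f :: 'a \<Rightarrow> (nat \<times> 'a \<Rightarrow> real). f ` UNIV \<subseteq> c0plus \<and> lip_embedding dist UNIV c0dist f (4 + \<epsilon>)"
    if "0 < \<epsilon>" for \<epsilon> :: real
  proof (intro exI conjI)
    define c where "c = \<epsilon> / (\<epsilon> + 16)"
    note c = distortion_constant[OF \<open>0 < \<epsilon>\<close>, folded c_def]
    show "range (embed c) \<subseteq> c0plus" using embed_in_c0plus[OF c(1)] by blast
    show "lip_embedding dist UNIV c0dist (embed c) (4 + \<epsilon>)"
      using embed_lipschitz embed_separates[OF c] \<open>0 < \<epsilon>\<close> by (intro lip_embedding_c0dist) auto
  qed
  then show ?thesis using Delta_c_le by blast
qed

end
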